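(* Let $C_0$ be a binary linear $[n_0,n_0-r_0]_2 3$ code whose parity-check matrix $H_0=[h_1\cdots h_{n_0}]$ admits a $(3,0)$-partition $\mathcal P_0$ into $p_0$ subsets. Let $\mathcal V_{2m}$ be a binary linear $[n_{2m},n_{2m}-2m]_2 2$ code with parity-check matrix $\mathcal H_{2m}$ admitting a $2$-partition $\mathcal P_{2m}$ into $p_{2m}$ subsets. Let $m\ge2$ with $2^m-1\ge p_0$, choose an indicator assignment with all $\beta_j\in\mathbb{F}_{2^m}^*=\mathbb{F}_{2^m}\setminus\{0\}$, let $$D_4=\begin{bmatrix}0_{r_0}&0_{r_0}\\ W_m&0_m\\ 0_{2m}&\mathcal H_{2m}\end{bmatrix},\qquad H_C=[D_4\ A_3(h_1,\beta_1)\ \cdots\ A_3(h_{n_0},\beta_{n_0})].$$ Then $H_C$ is the parity-check matrix of a binary linear code $C$ of length $n=2^m(n_0+1)+n_{2m}-1$, codimension $r=r_0+3m$ and covering radius $3$. Moreover: $H_C$ admits a $(3,0)$-partition into at most $p_0+p_{2m}+1$ subsets and a $(3,1)$-partition into at most $p_0+p_{2m}+3$ subsets; if $H_0$ (resp. $\mathcal H_{2m}$) has three columns summing to zero lying in three distinct subsets of $\mathcal P_0$ (resp. $\mathcal P_{2m}$), then $H_C$ admits a $(3,1)$-partition into at most $p_0+p_{2m}+1$ subsets; and if every vector of $\mathbb{F}_2^{2m}$ is a sum of $2$ or $3$ columns of $\mathcal H_{2m}$, then the trivial partition of $H_C$ (into singletons) is a $(3,2)$-partition, i.e. $C$ is a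 $(3,2)$-object.
   Context: Covering radius of a binary linear code with $r\times n$ parity-check matrix $H$: smallest $R$ such that every vector of $\mathbb{F}_2^r$ is a sum of at most $R$ columns of $H$. $[n,n-r]_2R$: length $n$, codimension $r$, covering radius $R$. For $0\le\ell\le R$, an $(R,\ell)$-partition of $H$ is a partition of its columns into nonempty subsets such that every vector of $\mathbb{F}_2^r$ (including zero) is the sum of at least $\ell$ and at most $R$ columns lying in pairwise distinct subsets (zero = empty sum when $\ell=0$); a code is an $(R,\ell)$-object if a parity-check matrix admits an $(R,\ell)$-partition. A $2$-partition means a $(2,0)$-partition. Construction notation: identify $\mathbb{F}_2^m$ with $\mathbb{F}_{2^m}$ via a fixed basis. For $h\in\mathbb{F}_2^{r_0}$ and $\beta\in\mathbb{F}_{2^m}$, $A_3(h,\beta)$ is the $(r_0+3m)\times2^m$ matrix with columns $(h,\xi,\beta\xi,\beta^2\xi)^T$, $\xi\in\mathbb{F}_{2^m}$. $W_m$ is the $m\times(2^m-1)$ matrix of all nonzero vectors of $\mathbb{F}_2^m$; $0_v$ denotes a zero block with $v$ rows. An indicator assignment for $H_0,\mathcal P_0$ assigns $\beta_j$ to column $h_j$ with $\beta_i\ne\beta_j$ whenever $h_i,h_j$ lie in distinct subsets of $\mathcal P_0$. *)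

theory Defs
  imports Main "HOL-Library.Z2" "HOL-Library.Disjoint_Sets" "HOL-Library.Function_Algebras"
begin

text \<open>Binary vectors of F_2^r are functions nat => bit vanishing outside {0..<r}.
  A matrix is a finite index set I of columns together with a column map c.\<close>

definition vecs :: "nat \<Rightarrow> (nat \<Rightarrow> bit) set" where
  "vecs r = {v. \<forall>i\<ge>r. v i = 0}"

definition col_sum :: "('i \<Rightarrow> nat \<Rightarrow> bit) \<Rightarrow> 'i set \<Rightarrow> (nat \<Rightarrow> bit)" where
  "col_sum c S = (\<Sum>j\<in>S. c j)"

definition vcat :: "nat \<Rightarrow> (nat \<Rightarrow> bit) \<Rightarrow> (nat \<Rightarrow> bit) \<Rightarrow> (nat \<Rightarrow> bit)" where
  "vcat k u v = (\<lambda>i. if i < k then u i else v (i - k))"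

definition covers :: "'i set \<Rightarrow> ('i \<Rightarrow> nat \<Rightarrow> bit) \<Rightarrow> nat \<Rightarrow> nat \<Rightarrow> bool" where
  "covers I c r R \<longleftrightarrow> (\<forall>v\<in>vecs r. \<exists>S\<subseteq>I. card S \<le> R \<and> col_sum c S = v)"

definition covering_radius :: "'i set \<Rightarrow> ('i \<Rightarrow> nat \<Rightarrow> bit) \<Rightarrow> nat \<Rightarrow> nat \<Rightarrow> bool" where
  "covering_radius I c r R \<longleftrightarrow> covers I c r R \<and> (\<forall>R'<R. \<not> covers I c r R')"

text \<open>(I,c) is an r x n parity-check matrix of an [n,n-r]_2 R code.\<close>
definition code_params :: "'i set \<Rightarrow> ('i \<Rightarrow> nat \<Rightarrow> bit) \<Rightarrow> nat \<Rightarrow> nat \<Rightarrow> nat \<Rightarrow> bool" where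
  "code_params I c n r R \<longleftrightarrow> finite I \<and> card I = n \<and> (\<forall>j\<in>I. c j \<in> vecs r)
     \<and> covering_radius I c r R"

definition separated :: "'i set set \<Rightarrow> 'i set \<Rightarrow> bool" where
  "separated P S \<longleftrightarrow> (\<forall>x\<in>S. \<forall>y\<in>S. x \<noteq> y \<longrightarrow> \<not> (\<exists>B\<in>P. x \<in> B \<and> y \<in> B))"

definition RL_partition :: "'i set \<Rightarrow> ('i \<Rightarrow> nat \<Rightarrow> bit) \<Rightarrow> nat \<Rightarrow> nat \<Rightarrow> nat \<Rightarrow> 'i set set \<Rightarrow> bool" where
  "RL_partition I c r R l P \<longleftrightarrow> partition_on I P \<and>
     (\<forall>v\<in>vecs r. \<exists>S\<subseteq>I. l \<le> card S \<and> card S \<le> R \<and> separated P S \<and> col_sum c S = v)"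

definition indicator_assignment :: "'i set \<Rightarrow> 'i set set \<Rightarrow> ('i \<Rightarrow> 'f::zero) \<Rightarrow> bool" where
  "indicator_assignment I P \<beta> \<longleftrightarrow>
     (\<forall>i\<in>I. \<forall>j\<in>I. (\<not> (\<exists>B\<in>P. i \<in> B \<and> j \<in> B)) \<longrightarrow> \<beta> i \<noteq> \<beta> j)"

definition three_zero_sum :: "'i set \<Rightarrow> ('i \<Rightarrow> nat \<Rightarrow> bit) \<Rightarrow> 'i set set \<Rightarrow> bool" where
  "three_zero_sum I c P \<longleftrightarrow> (\<exists>S\<subseteq>I. card S = 3 \<and> separated P S \<and> col_sum c S = 0)"

text \<open>Columns of H_C.  Index set: nonzero w in F_2^m (columns of W_m),
  columns of H_2m, and pairs (j, xi) for the blocks A_3(h_j, beta_j).\<close>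
definition HC_index :: "nat \<Rightarrow> 'b set \<Rightarrow> 'a set \<Rightarrow> ((((nat \<Rightarrow> bit) + 'b) + ('a \<times> 'f)) set)" where
  "HC_index m J I0 = Inl ` (Inl ` (vecs m - {0}) \<union> Inr ` J) \<union> Inr ` (I0 \<times> UNIV)"

fun HC_col :: "nat \<Rightarrow> nat \<Rightarrow> ('f::field \<Rightarrow> nat \<Rightarrow> bit) \<Rightarrow> ('a \<Rightarrow> nat \<Rightarrow> bit) \<Rightarrow> ('b \<Rightarrow> nat \<Rightarrow> bit)
     \<Rightarrow> ('a \<Rightarrow> 'f) \<Rightarrow> (((nat \<Rightarrow> bit) + 'b) + ('a \<times> 'f)) \<Rightarrow> nat \<Rightarrow> bit" where
  "HC_col r0 m \<phi> h g \<beta> (Inl (Inl w)) = vcat r0 0 (vcat m w 0)"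
| "HC_col r0 m \<phi> h g \<beta> (Inl (Inr j)) = vcat r0 0 (vcat m 0 (g j))"
| "HC_col r0 m \<phi> h g \<beta> (Inr (j, \<xi>)) =
     vcat r0 (h j) (vcat m (\<phi> \<xi>) (vcat m (\<phi> (\<beta> j * \<xi>)) (\<phi> (\<beta> j ^ 2 * \<xi>))))"

end

theory Submission
  imports Defs
begin

text \<open>
  Write a target vector as \<open>(u, a, b, c)\<close> with \<open>u\<close> in \<open>F_2^r0\<close> and \<open>a, b, c\<close> in
  \<open>F_(2^m)\<close>. The \<open>(3,0)\<close>-partition of \<open>H_0\<close> writes \<open>u\<close> as a sum of at most three
  columns \<open>h_j\<close> from distinct blocks, whose indicators \<open>beta_j\<close> are therefore distinct
  and nonzero. Choosing the columns \<open>(h_j, xi_j, beta_j xi_j, beta_j^2 xi_j)\<close> of the blocks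
  \<open>A_3\<close> turns the remaining coordinates into a Vandermonde system for the \<open>xi_j\<close>; when
  fewer than three \<open>h_j\<close> are used, the missing unknowns are supplied by one column of
  \<open>W_m\<close> (for \<open>a\<close>) and by at most two columns of \<open>H_2m\<close> (for \<open>(b, c)\<close>), never more
  than three columns in all, from distinct blocks. Hence labelling a column by the block
  of \<open>P_0\<close> or \<open>P_2m\<close> it comes from, and all of \<open>W_m\<close> by one extra label, gives a
  \<open>(3,0)\<close>-partition. The radius is not 2: in the first \<open>r0\<close> rows a sum of at most two
  columns of \<open>H_C\<close> is a sum of at most two columns of \<open>H_0\<close>, as two \<open>A_3\<close> columns
  with the same \<open>j\<close> cancel there. For a \<open>(3,1)\<close>-partition the zero vector needs a
  nonempty representation: three columns \<open>w1, w2, w1 + w2\<close> of \<open>W_m\<close> given three labels,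
  or a three-term zero sum of \<open>H_0\<close> or \<open>H_2m\<close>. For the \<open>(3,2)\<close> statement every single
  column is a sum of two or three others.
\<close>

lemma bitvec_add_self [simp]: "(v::nat \<Rightarrow> bit) + v = 0"
  by (simp add: fun_eq_iff)

lemma sum_fun_apply: "sum f S i = (\<Sum>x\<in>S. f x i)"
  by (induction S rule: infinite_finite_induct) auto

lemma zero_in_vecs [simp]: "0 \<in> vecs r"
  by (simp add: vecs_def)

lemma sum_in_vecs: "(\<And>x. x \<in> S \<Longrightarrow> f x \<in> vecs r) \<Longrightarrow> sum f S \<in> vecs r"
  by (auto simp: vecs_def sum_fun_apply)

lemma vcat_add: "vcat k u v + vcat k u' v' = vcat k (u + u') (v + v')"
  by (auto simp: vcat_def fun_eq_iff)

lemma vcat_zero [simp]: "vcat k 0 0 = 0"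
  by (auto simp: vcat_def fun_eq_iff)

lemma vcat_sum: "(\<Sum>x\<in>S. vcat k (f x) (g x)) = vcat k (sum f S) (sum g S)"
  by (induction S rule: infinite_finite_induct) (auto simp: vcat_add vcat_def fun_eq_iff)

lemma vcat_in_vecs: "v \<in> vecs l \<Longrightarrow> vcat k u v \<in> vecs (k + l)"
  by (auto simp: vecs_def vcat_def)

lemma vecs_add_cases:
  assumes "w \<in> vecs (k + l)"
  obtains u v where "u \<in> vecs k" "v \<in> vecs l" "w = vcat k u v"
proof
  show "(\<lambda>i. if i < k then w i else 0) \<in> vecs k" "(\<lambda>i. w (i + k)) \<in> vecs l"
    "w = vcat k (\<lambda>i. if i < k then w i else 0) (\<lambda>i. w (i + k))"
    using assms by (auto simp: vecs_def vcat_def fun_eq_iff)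
qed

lemma vcat_eq_imp_eq_top:
  assumes "vcat k u v = vcat k u' v'" "u \<in> vecs k" "u' \<in> vecs k"
  shows "u = u'"
proof
  fix i show "u i = u' i"
    using fun_cong[OF assms(1), of i] assms(2,3) by (cases "i < k") (simp_all add: vcat_def vecs_def)
qed

lemma covers_mono: "covers I c r R' \<Longrightarrow> R' \<le> R \<Longrightarrow> covers I c r R"
  unfolding covers_def by (meson order_trans)

definition block_of :: "'x set set \<Rightarrow> 'x \<Rightarrow> 'x set" where
  "block_of P x = (SOME B. B \<in> P \<and> x \<in> B)"

lemma block_of_in:
  assumes "partition_on A P" "x \<in> A"
  shows "block_of P x \<in> P" "x \<in> block_of P x"
proof -
  have "\<exists>B. B \<in> P \<and> x \<in> B" using assms partition_onD1 by fastforce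
  then have "block_of P x \<in> P \<and> x \<in> block_of P x" unfolding block_of_def by (rule someI_ex)
  then show "block_of P x \<in> P" "x \<in> block_of P x" by auto
qed

lemma block_of_eq_iff:
  assumes "partition_on A P" "x \<in> A" "y \<in> A"
  shows "block_of P x = block_of P y \<longleftrightarrow> (\<exists>B\<in>P. x \<in> B \<and> y \<in> B)"
proof
  assume "block_of P x = block_of P y"
  then show "\<exists>B\<in>P. x \<in> B \<and> y \<in> B"
    using block_of_in[OF assms(1,2)] block_of_in[OF assms(1,3)] by auto
next
  assume "\<exists>B\<in>P. x \<in> B \<and> y \<in> B"
  then obtain B where B: "B \<in> P" "x \<in> B" "y \<in> B" by blast
  have disj: "disjoint P" using assms(1) partition_onD2 by blast
  have "block_of P x = B" using disj B block_of_in[OF assms(1,2)] unfolding disjoint_def by blast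
  moreover have "block_of P y = B" using disj B block_of_in[OF assms(1,3)] unfolding disjoint_def by blast
  ultimately show "block_of P x = block_of P y" by simp
qed

lemma inj_on_block_of_if_separated:
  assumes "partition_on A P" "S \<subseteq> A" "separated P S"
  shows "inj_on (block_of P) S"
proof (rule inj_onI)
  fix x y assume xy: "x \<in> S" "y \<in> S" "block_of P x = block_of P y"
  then have "\<exists>B\<in>P. x \<in> B \<and> y \<in> B" using block_of_eq_iff[OF assms(1)] assms(2) by blast
  then show "x = y" using assms(3) xy(1,2) unfolding separated_def by (metis (no_types))
qed

lemma indicator_assignment_neq:
  assumes "indicator_assignment A P \<beta>" "partition_on A P" "x \<in> A" "y \<in> A"
    "block_of P x \<noteq> block_of P y"
  shows "\<beta> x \<noteq> \<beta> y"
  using assms block_of_eq_iff[OF assms(2-4)] unfolding indicator_assignment_def by blast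

definition label_classes :: "'x set \<Rightarrow> ('x \<Rightarrow> 'l) \<Rightarrow> 'x set set" where
  "label_classes A lab = (\<lambda>k. {x\<in>A. lab x = k}) ` lab ` A"

lemma partition_on_label_classes: "partition_on A (label_classes A lab)"
  by (auto simp: label_classes_def partition_on_def disjoint_def)

lemma separated_label_classes: "inj_on lab S \<Longrightarrow> separated (label_classes A lab) S"
  by (auto simp: label_classes_def separated_def inj_on_def)

lemma card_label_classes_le: "finite A \<Longrightarrow> card (label_classes A lab) \<le> card (lab ` A)"
  unfolding label_classes_def by (rule card_image_le) auto

lemma RL_partition_label_classesI:
  assumes "\<And>v. v \<in> vecs r \<Longrightarrow> \<exists>S\<subseteq>I. l \<le> card S \<and> card S \<le> R \<and> inj_on lab S \<and> col_sum c S = v"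
  shows "RL_partition I c r R l (label_classes I lab)"
  unfolding RL_partition_def
proof (intro conjI ballI partition_on_label_classes)
  fix v assume "v \<in> vecs r"
  then obtain S where "S \<subseteq> I" "l \<le> card S" "card S \<le> R" "inj_on lab S" "col_sum c S = v"
    using assms by blast
  then show "\<exists>S\<subseteq>I. l \<le> card S \<and> card S \<le> R \<and> separated (label_classes I lab) S \<and> col_sum c S = v"
    using separated_label_classes by blast
qed

lemma RL_partition_singletonsI:
  assumes "\<And>v. v \<in> vecs r \<Longrightarrow> \<exists>S\<subseteq>I. l \<le> card S \<and> card S \<le> R \<and> col_sum c S = v"
  shows "RL_partition I c r R l ((\<lambda>x. {x}) ` I)"
  using assms partition_on_singletons unfolding RL_partition_def separated_def by fastforce

lemma card_le_3_cases:
  assumes "finite S" "card S \<le> 3"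
  obtains "S = {}" | x where "S = {x}" | x y where "S = {x, y}" "x \<noteq> y"
    | x y z where "S = {x, y, z}" "x \<noteq> y" "x \<noteq> z" "y \<noteq> z"
proof -
  consider "card S = 0" | "card S = 1" | "card S = 2" | "card S = 3" using assms(2) by linarith
  then show ?thesis
    using that assms(1) by cases (auto simp: card_1_singleton_iff card_2_iff card_3_iff)
qed

lemma exists_avoiding_two:
  fixes a b :: "'x::finite"
  assumes "2 < card (UNIV :: 'x set)"
  obtains x where "x \<noteq> a" "x \<noteq> b"
proof -
  have "\<not> UNIV \<subseteq> {a, b}"
    using card_mono[of "{a, b}" UNIV] card_insert_le_m1[of 2 "{b}" a] assms by auto
  then show ?thesis using that by blast
qed

lemma scaled_vandermonde2_solvable:
  fixes b1 b2 b c :: "'f::field"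
  assumes "b1 \<noteq> 0" "b2 \<noteq> 0" "b1 \<noteq> b2"
  obtains x1 x2 where "b1 * x1 + b2 * x2 = b" "b1 ^ 2 * x1 + b2 ^ 2 * x2 = c"
proof
  define D1 where "D1 = b1 * (b1 - b2)"
  define D2 where "D2 = b2 * (b2 - b1)"
  have "D1 \<noteq> 0" "D2 \<noteq> 0" using assms by (auto simp: D1_def D2_def)
  then show "b1 * ((c - b2 * b) / D1) + b2 * ((c - b1 * b) / D2) = b"
    "b1 ^ 2 * ((c - b2 * b) / D1) + b2 ^ 2 * ((c - b1 * b) / D2) = c"
    by (simp_all add: field_simps) (simp_all add: D1_def D2_def algebra_simps power2_eq_square)
qed

lemma vandermonde3_solvable:
  fixes b1 b2 b3 a b c :: "'f::field"
  assumes "b1 \<noteq> b2" "b1 \<noteq> b3" "b2 \<noteq> b3"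
  obtains x1 x2 x3 where "x1 + x2 + x3 = a" "b1 * x1 + b2 * x2 + b3 * x3 = b"
    "b1 ^ 2 * x1 + b2 ^ 2 * x2 + b3 ^ 2 * x3 = c"
proof
  define D1 where "D1 = (b1 - b2) * (b1 - b3)"
  define D2 where "D2 = (b2 - b1) * (b2 - b3)"
  define D3 where "D3 = (b3 - b1) * (b3 - b2)"
  have d: "D1 \<noteq> 0" "D2 \<noteq> 0" "D3 \<noteq> 0" using assms by (auto simp: D1_def D2_def D3_def)
  define x1 where "x1 = (c - (b2 + b3) * b + b2 * b3 * a) / D1"
  define x2 where "x2 = (c - (b1 + b3) * b + b1 * b3 * a) / D2"
  define x3 where "x3 = (c - (b1 + b2) * b + b1 * b2 * a) / D3"
  show "x1 + x2 + x3 = a" "b1 * x1 + b2 * x2 + b3 * x3 = b"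
    "b1 ^ 2 * x1 + b2 ^ 2 * x2 + b3 ^ 2 * x3 = c"
    using d unfolding x1_def x2_def x3_def
    by (simp_all add: field_simps)
      (simp_all add: D1_def D2_def D3_def algebra_simps power2_eq_square)
qed

locale binary_field_coords =
  fixes \<phi> :: "'f::{field,finite} \<Rightarrow> nat \<Rightarrow> bit" and m :: nat
  assumes coords_bij: "bij_betw \<phi> UNIV (vecs m)"
    and coords_add: "\<And>x y. \<phi> (x + y) = \<phi> x + \<phi> y"
begin

lemma coords_zero [simp]: "\<phi> 0 = 0"
  using coords_add[of 0 0] bitvec_add_self[of "\<phi> 0"] by simp

lemma coords_eq_iff [simp]: "\<phi> x = \<phi> y \<longleftrightarrow> x = y"
  using coords_bij unfolding bij_betw_def inj_on_def by auto

lemma coords_eq_0_iff [simp]: "\<phi> x = 0 \<longleftrightarrow> x = 0"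
  using coords_eq_iff[of x 0] by simp

lemma coords_in_vecs [simp]: "\<phi> x \<in> vecs m"
  using coords_bij unfolding bij_betw_def by auto

lemma vecs_eq_range_coords: "vecs m = range \<phi>"
  using coords_bij unfolding bij_betw_def by auto

lemma finite_vecs [simp]: "finite (vecs m)"
  by (simp add: vecs_eq_range_coords)

lemma card_vecs: "card (vecs m) = card (UNIV :: 'f set)"
  using bij_betw_same_card[OF coords_bij] by simp

lemma coords_sum: "\<phi> (sum f S) = (\<Sum>x\<in>S. \<phi> (f x))"
  by (induction S rule: infinite_finite_induct) (auto simp: coords_add)

lemma coords_diff: "\<phi> x + \<phi> (y - x) = \<phi> y"
  using coords_add[of x "y - x"] by simp

text \<open>The field inherits characteristic 2 from \<open>bit\<close> through the additive injection.\<close>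
lemma add_self_eq_0 [simp]: "(x::'f) + x = 0"
  using coords_add[of x x] by simp

lemma add_eq_0_iff_eq: "(x::'f) + y = 0 \<longleftrightarrow> x = y"
  by (metis add_self_eq_0 add_left_cancel)

lemma add_cancel_left [simp]: "(x::'f) + (x + y) = y"
  by (simp add: add.assoc[symmetric])

definition nonzero_coords :: "'f \<Rightarrow> (nat \<Rightarrow> bit) set" where
  "nonzero_coords a = \<phi> ` ({a} - {0})"

lemma nonzero_coords:
  "finite (nonzero_coords a)" "nonzero_coords a \<subseteq> vecs m - {0}"
  "card (nonzero_coords a) \<le> 1" "\<Sum>(nonzero_coords a) = \<phi> a"
  by (cases "a = 0"; simp add: nonzero_coords_def)+

end

type_synonym ('a, 'b, 'f) hc_index = "((nat \<Rightarrow> bit) + 'b) + ('a \<times> 'f)"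

definition HC_select :: "('a \<times> 'f) set \<Rightarrow> (nat \<Rightarrow> bit) set \<Rightarrow> 'b set \<Rightarrow> ('a, 'b, 'f) hc_index set" where
  "HC_select T W S = Inr ` T \<union> Inl ` (Inl ` W \<union> Inr ` S)"

lemma HC_select_parts: "X = HC_select {p. Inr p \<in> X} {w. Inl (Inl w) \<in> X} {j. Inl (Inr j) \<in> X}"
proof (rule set_eqI)
  fix x show "x \<in> X \<longleftrightarrow> x \<in> HC_select {p. Inr p \<in> X} {w. Inl (Inl w) \<in> X} {j. Inl (Inr j) \<in> X}"
  proof (cases x)
    case (Inl y)
    then show ?thesis by (cases y) (auto simp: HC_select_def)
  qed (auto simp: HC_select_def)
qed

lemma HC_index_eq_HC_select: "HC_index m J I0 = HC_select (I0 \<times> UNIV) (vecs m - {0}) J"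
  unfolding HC_select_def HC_index_def by blast

lemma HC_select_mono:
  "T \<subseteq> T' \<Longrightarrow> W \<subseteq> W' \<Longrightarrow> S \<subseteq> S' \<Longrightarrow> HC_select T W S \<subseteq> HC_select T' W' S'"
  unfolding HC_select_def by blast

lemma card_HC_select:
  fixes T :: "('a \<times> 'f) set" and W :: "(nat \<Rightarrow> bit) set" and S :: "'b set"
  assumes "finite T" "finite W" "finite S"
  shows "card (HC_select T W S) = card T + card W + card S"
proof -
  have "card (HC_select T W S) =
      card (Inr ` T :: ('a, 'b, 'f) hc_index set) + card (Inl ` (Inl ` W \<union> Inr ` S) :: ('a, 'b, 'f) hc_index set)"
    unfolding HC_select_def by (intro card_Un_disjoint) (use assms in auto)
  also have "\<dots> = card T + card (Inl ` W \<union> Inr ` S :: ((nat \<Rightarrow> bit) + 'b) set)"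
    by (simp add: card_image)
  also have "\<dots> = card T + card W + card S"
    by (subst card_Un_disjoint) (use assms in \<open>auto simp: card_image\<close>)
  finally show ?thesis .
qed

fun HC_label :: "('a \<Rightarrow> 'l) \<Rightarrow> ('b \<Rightarrow> 'l') \<Rightarrow> ((nat \<Rightarrow> bit) \<Rightarrow> nat)
    \<Rightarrow> ('a, 'b, 'f) hc_index \<Rightarrow> ('l + 'l') + nat" where
  "HC_label B0 B2 k (Inl (Inl w)) = Inr (k w)"
| "HC_label B0 B2 k (Inl (Inr j)) = Inl (Inr (B2 j))"
| "HC_label B0 B2 k (Inr (j, \<xi>)) = Inl (Inl (B0 j))"

lemma inj_on_HC_label:
  assumes "inj_on (B0 \<circ> fst) T" "inj_on k W" "inj_on B2 S"
  shows "inj_on (HC_label B0 B2 k) (HC_select T W S)"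
  using assms unfolding inj_on_def HC_select_def by fastforce

lemma sum_fst_as_sum_le2:
  fixes h :: "'a \<Rightarrow> nat \<Rightarrow> bit"
  assumes "finite T" "fst ` T \<subseteq> I" "card T \<le> 2"
  obtains S where "S \<subseteq> I" "card S \<le> 2" "sum h S = (\<Sum>x\<in>T. h (fst x))"
proof -
  from assms(1,3) have "card T \<le> 3" by simp
  with assms(1) show ?thesis
  proof (cases rule: card_le_3_cases)
    case 1
    then show ?thesis using that[of "{}"] by simp
  next
    case (2 p)
    then show ?thesis using that[of "{fst p}"] assms(2) by simp
  next
    case (3 p q)
    show ?thesis
    proof (cases "fst p = fst q")
      case True
      then show ?thesis using that[of "{}"] 3 by simp
    next
      case False
      then show ?thesis using that[of "{fst p, fst q}"] 3 assms(2) by auto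
    qed
  next
    case (4 p q r)
    then show ?thesis using assms(3) by simp
  qed
qed

locale HC_construction = binary_field_coords \<phi> m
  for \<phi> :: "'f::{field,finite} \<Rightarrow> nat \<Rightarrow> bit" and m :: nat +
  fixes I0 :: "'a set" and h :: "'a \<Rightarrow> nat \<Rightarrow> bit" and P0 :: "'a set set"
    and J :: "'b set" and g :: "'b \<Rightarrow> nat \<Rightarrow> bit" and P2 :: "'b set set"
    and \<beta> :: "'a \<Rightarrow> 'f" and r0 :: nat
  assumes finite_I0: "finite I0" and h_in_vecs: "\<And>j. j \<in> I0 \<Longrightarrow> h j \<in> vecs r0"
    and P0: "RL_partition I0 h r0 3 0 P0"
    and finite_J: "finite J" and g_in_vecs: "\<And>j. j \<in> J \<Longrightarrow> g j \<in> vecs (2 * m)"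
    and P2: "RL_partition J g (2 * m) 2 0 P2"
    and card_field_gt2: "2 < card (UNIV :: 'f set)"
    and \<beta>_indicator: "indicator_assignment I0 P0 \<beta>"
    and \<beta>_nonzero: "\<And>j. j \<in> I0 \<Longrightarrow> \<beta> j \<noteq> 0"
begin

abbreviation IC :: "('a, 'b, 'f) hc_index set" where
  "IC \<equiv> HC_index m J I0"

abbreviation cC :: "('a, 'b, 'f) hc_index \<Rightarrow> nat \<Rightarrow> bit" where
  "cC \<equiv> HC_col r0 m \<phi> h g \<beta>"

abbreviation HC_lab :: "((nat \<Rightarrow> bit) \<Rightarrow> nat) \<Rightarrow> ('a, 'b, 'f) hc_index \<Rightarrow> ('a set + 'b set) + nat" where
  "HC_lab k \<equiv> HC_label (block_of P0) (block_of P2) k"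

lemma partition_P0: "partition_on I0 P0"
  using P0 by (simp add: RL_partition_def)

lemma partition_P2: "partition_on J P2"
  using P2 by (simp add: RL_partition_def)

lemma finite_IC [simp]: "finite IC"
  using finite_I0 finite_J by (simp add: HC_index_def)

lemma card_IC: "card IC = card (UNIV :: 'f set) * card I0 + (card (UNIV :: 'f set) - 1) + card J"
  using finite_I0 finite_J
  by (simp add: HC_index_eq_HC_select card_HC_select card_cartesian_product card_vecs)

lemma HC_select_subset_IC:
  "T \<subseteq> I0 \<times> UNIV \<Longrightarrow> W \<subseteq> vecs m - {0} \<Longrightarrow> S \<subseteq> J \<Longrightarrow> HC_select T W S \<subseteq> IC"
  unfolding HC_index_eq_HC_select by (rule HC_select_mono)

lemma HC_col_in_vecs: "x \<in> IC \<Longrightarrow> cC x \<in> vecs (r0 + 3 * m)"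
  using g_in_vecs vcat_in_vecs[of _ "2 * m" m] vcat_in_vecs[of _ "3 * m" r0]
    vcat_in_vecs[of _ m m]
  by (auto simp: HC_index_def numeral_3_eq_3 mult_2)

lemma HC_col_Inr: "cC (Inr p) = vcat r0 (h (fst p))
    (vcat m (\<phi> (snd p)) (vcat m (\<phi> (\<beta> (fst p) * snd p)) (\<phi> (\<beta> (fst p) ^ 2 * snd p))))"
  by (cases p) simp

lemma col_sum_HC_select:
  assumes "finite T" "finite W" "finite S"
  shows "col_sum cC (HC_select T W S) = vcat r0 (\<Sum>p\<in>T. h (fst p))
     (vcat m (\<phi> (\<Sum>p\<in>T. snd p) + \<Sum>W)
       (vcat m (\<phi> (\<Sum>p\<in>T. \<beta> (fst p) * snd p)) (\<phi> (\<Sum>p\<in>T. \<beta> (fst p) ^ 2 * snd p)) + sum g S))"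
proof -
  have "col_sum cC (HC_select T W S) = sum cC (Inr ` T) + sum cC (Inl ` Inl ` W \<union> Inl ` Inr ` S)"
    unfolding col_sum_def HC_select_def image_Un by (rule sum.union_disjoint) (use assms in auto)
  also have "sum cC (Inl ` Inl ` W \<union> Inl ` Inr ` S) = sum cC (Inl ` Inl ` W) + sum cC (Inl ` Inr ` S)"
    by (rule sum.union_disjoint) (use assms in auto)
  also have "sum cC (Inr ` T) + (sum cC (Inl ` Inl ` W) + sum cC (Inl ` Inr ` S)) =
      (\<Sum>p\<in>T. cC (Inr p)) + ((\<Sum>w\<in>W. cC (Inl (Inl w))) + (\<Sum>j\<in>S. cC (Inl (Inr j))))"
    by (simp add: sum.reindex)
  also have "\<dots> = vcat r0 (\<Sum>p\<in>T. h (fst p))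
     (vcat m (\<phi> (\<Sum>p\<in>T. snd p))
       (vcat m (\<phi> (\<Sum>p\<in>T. \<beta> (fst p) * snd p)) (\<phi> (\<Sum>p\<in>T. \<beta> (fst p) ^ 2 * snd p))))
     + vcat r0 0 (vcat m (\<Sum>W) (sum g S))"
    by (simp add: HC_col_Inr vcat_sum coords_sum vcat_add flip: zero_fun_def)
  finally show ?thesis by (simp add: vcat_add)
qed

lemma vecs_HC_cases:
  assumes "v \<in> vecs (r0 + 3 * m)"
  obtains u a b c where "u \<in> vecs r0" "v = vcat r0 u (vcat m (\<phi> a) (vcat m (\<phi> b) (\<phi> c)))"
proof -
  obtain u t where "u \<in> vecs r0" "t \<in> vecs (m + (m + m))" "v = vcat r0 u t"
    using assms by (auto simp: numeral_3_eq_3 elim: vecs_add_cases)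
  moreover obtain x y z where "x \<in> vecs m" "y \<in> vecs m" "z \<in> vecs m" "t = vcat m x (vcat m y z)"
    using \<open>t \<in> vecs (m + (m + m))\<close> by (metis vecs_add_cases)
  moreover obtain a b c where "x = \<phi> a" "y = \<phi> b" "z = \<phi> c"
    using calculation(4-6) vecs_eq_range_coords by auto
  ultimately show ?thesis using that by blast
qed

text \<open>Quantifying over the labelling \<open>k\<close> of the \<open>W_m\<close> columns is harmless: a short sum
  uses at most one of them.\<close>
definition HC_short_sum :: "(nat \<Rightarrow> bit) \<Rightarrow> bool" where
  "HC_short_sum v \<longleftrightarrow> (\<exists>S\<subseteq>IC. card S \<le> 3 \<and> (\<forall>k. inj_on (HC_lab k) S) \<and> col_sum cC S = v)"

lemma HC_short_sumI:
  assumes "T \<subseteq> I0 \<times> UNIV" "inj_on (block_of P0 \<circ> fst) T"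
    "W \<subseteq> vecs m - {0}" "card W \<le> 1" "S \<subseteq> J" "inj_on (block_of P2) S"
    "card T + card W + card S \<le> 3" "col_sum cC (HC_select T W S) = v"
  shows "HC_short_sum v"
  unfolding HC_short_sum_def
proof (intro exI conjI allI)
  have fin: "finite T" "finite W" "finite S"
    using finite_subset[OF assms(1)] finite_subset[OF assms(3)] finite_subset[OF assms(5)]
      finite_I0 finite_J by auto
  show "HC_select T W S \<subseteq> IC"
    using assms(1,3,5) by (rule HC_select_subset_IC)
  show "card (HC_select T W S) \<le> 3" using assms(7) card_HC_select[OF fin] by simp
  show "inj_on (HC_lab k) (HC_select T W S)" for k
    using assms(2,4,6) fin(2) by (intro inj_on_HC_label) (auto simp: card_le_Suc0_iff_eq inj_on_def)
qed (fact assms(8))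

lemma P2_short_sum:
  assumes "t \<in> vecs (2 * m)"
  obtains S where "S \<subseteq> J" "card S \<le> 2" "inj_on (block_of P2) S" "sum g S = t"
  using assms P2 inj_on_block_of_if_separated[OF partition_P2]
  unfolding RL_partition_def col_sum_def by metis

lemma coords_pair_in_vecs: "vcat m (\<phi> x) (\<phi> y) \<in> vecs (2 * m)"
  using vcat_in_vecs[of _ m m] by (simp add: mult_2)

lemma HC_short_sum_no_block: "HC_short_sum (vcat r0 0 (vcat m (\<phi> a) (vcat m (\<phi> b) (\<phi> c))))"
proof -
  obtain S where S: "S \<subseteq> J" "card S \<le> 2" "inj_on (block_of P2) S"
    "sum g S = vcat m (\<phi> b) (\<phi> c)"
    using P2_short_sum[OF coords_pair_in_vecs] .
  have "finite S" using S(1) finite_J finite_subset by blast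
  then show ?thesis
    using S nonzero_coords[of a]
    by (intro HC_short_sumI[of "{}" "nonzero_coords a" S]) (auto simp: col_sum_HC_select vcat_add)
qed

lemma \<beta>_neq:
  "i \<in> I0 \<Longrightarrow> j \<in> I0 \<Longrightarrow> block_of P0 i \<noteq> block_of P0 j \<Longrightarrow> \<beta> i \<noteq> \<beta> j"
  using indicator_assignment_neq[OF \<beta>_indicator partition_P0] .

lemma HC_short_sum_one_block:
  assumes "j \<in> I0"
  shows "HC_short_sum (vcat r0 (h j) (vcat m (\<phi> a) (vcat m (\<phi> b) (\<phi> c))))"
proof -
  obtain S where S: "S \<subseteq> J" "card S \<le> 2" "inj_on (block_of P2) S"
    "sum g S = vcat m (\<phi> (b - \<beta> j * a)) (\<phi> (c - \<beta> j ^ 2 * a))"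
    using P2_short_sum[OF coords_pair_in_vecs] .
  have "finite S" using S(1) finite_J finite_subset by blast
  then show ?thesis
    using S assms
    by (intro HC_short_sumI[of "{(j, a)}" "{}" S]) (auto simp: col_sum_HC_select vcat_add coords_diff)
qed

lemma HC_short_sum_two_blocks:
  assumes "j1 \<in> I0" "j2 \<in> I0" "block_of P0 j1 \<noteq> block_of P0 j2"
  shows "HC_short_sum (vcat r0 (h j1 + h j2) (vcat m (\<phi> a) (vcat m (\<phi> b) (\<phi> c))))"
proof -
  obtain x1 x2 where x: "\<beta> j1 * x1 + \<beta> j2 * x2 = b" "\<beta> j1 ^ 2 * x1 + \<beta> j2 ^ 2 * x2 = c"
    using scaled_vandermonde2_solvable \<beta>_nonzero \<beta>_neq assms by metis
  define W where "W = nonzero_coords (a - (x1 + x2))"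
  have "\<phi> (x1 + x2) + \<Sum>W = \<phi> a"
    unfolding W_def nonzero_coords(4) by (rule coords_diff)
  moreover have "j1 \<noteq> j2" using assms(3) by blast
  ultimately show ?thesis
    using assms x nonzero_coords[of "a - (x1 + x2)"]
    by (intro HC_short_sumI[of "{(j1, x1), (j2, x2)}" W "{}"])
      (auto simp: W_def col_sum_HC_select coords_add)
qed

lemma HC_short_sum_three_blocks:
  assumes "j1 \<in> I0" "j2 \<in> I0" "j3 \<in> I0" "block_of P0 j1 \<noteq> block_of P0 j2"
    "block_of P0 j1 \<noteq> block_of P0 j3" "block_of P0 j2 \<noteq> block_of P0 j3"
  shows "HC_short_sum (vcat r0 (h j1 + h j2 + h j3) (vcat m (\<phi> a) (vcat m (\<phi> b) (\<phi> c))))"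
proof -
  obtain x1 x2 x3 where x: "x1 + x2 + x3 = a" "\<beta> j1 * x1 + \<beta> j2 * x2 + \<beta> j3 * x3 = b"
    "\<beta> j1 ^ 2 * x1 + \<beta> j2 ^ 2 * x2 + \<beta> j3 ^ 2 * x3 = c"
    using vandermonde3_solvable \<beta>_neq assms by metis
  have "j1 \<noteq> j2" "j1 \<noteq> j3" "j2 \<noteq> j3" using assms(4-6) by auto
  then show ?thesis
    using assms x
    by (intro HC_short_sumI[of "{(j1, x1), (j2, x2), (j3, x3)}" "{}" "{}"])
      (auto simp: col_sum_HC_select add.assoc)
qed

lemma HC_short_sum_all:
  assumes "v \<in> vecs (r0 + 3 * m)"
  shows "HC_short_sum v"
proof -
  obtain u a b c where u: "u \<in> vecs r0" and v: "v = vcat r0 u (vcat m (\<phi> a) (vcat m (\<phi> b) (\<phi> c)))"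
    using vecs_HC_cases[OF assms] .
  obtain S0 where S0: "S0 \<subseteq> I0" "card S0 \<le> 3" "separated P0 S0" "sum h S0 = u"
    using P0 u unfolding RL_partition_def col_sum_def by blast
  have inj: "inj_on (block_of P0) S0"
    using inj_on_block_of_if_separated[OF partition_P0 S0(1,3)] .
  have "finite S0" using S0(1) finite_I0 finite_subset by blast
  from this S0(2) show ?thesis
  proof (cases rule: card_le_3_cases)
    case 1
    then show ?thesis using HC_short_sum_no_block by (simp add: v flip: S0(4))
  next
    case (2 j)
    then show ?thesis using S0(1) HC_short_sum_one_block by (simp add: v flip: S0(4))
  next
    case (3 j1 j2)
    then show ?thesis using S0(1) inj HC_short_sum_two_blocks by (simp add: v flip: S0(4))
  next
    case (4 j1 j2 j3)
    then show ?thesis using S0(1) inj HC_short_sum_three_blocks by (simp add: v add.assoc flip: S0(4))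
  qed
qed

lemma not_covers_2:
  assumes "\<not> covers I0 h r0 2"
  shows "\<not> covers IC cC (r0 + 3 * m) 2"
proof
  assume "covers IC cC (r0 + 3 * m) 2"
  obtain u where u: "u \<in> vecs r0" "\<And>S. S \<subseteq> I0 \<Longrightarrow> card S \<le> 2 \<Longrightarrow> sum h S \<noteq> u"
    using assms unfolding covers_def col_sum_def by blast
  have "vcat r0 u 0 \<in> vecs (r0 + 3 * m)" by (rule vcat_in_vecs) simp
  then obtain X where X: "X \<subseteq> IC" "card X \<le> 2" "col_sum cC X = vcat r0 u 0"
    using \<open>covers IC cC (r0 + 3 * m) 2\<close> unfolding covers_def by blast
  define T where "T = {p. Inr p \<in> X}"
  define W where "W = {w. Inl (Inl w) \<in> X}"
  define S where "S = {j. Inl (Inr j) \<in> X}"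
  have X_eq: "X = HC_select T W S"
    unfolding T_def W_def S_def by (rule HC_select_parts)
  have sub: "T \<subseteq> I0 \<times> UNIV" "W \<subseteq> vecs m" "S \<subseteq> J"
    using X(1) by (auto simp: T_def W_def S_def HC_index_def)
  have fin: "finite T" "finite W" "finite S"
    using finite_subset[OF sub(1)] finite_subset[OF sub(2)] finite_subset[OF sub(3)]
      finite_I0 finite_J by auto
  have "card T \<le> 2" using X(2) card_HC_select[OF fin] X_eq by simp
  moreover have "fst ` T \<subseteq> I0" using sub(1) by auto
  moreover have "(\<Sum>p\<in>T. h (fst p)) = u"
    using X(3) unfolding X_eq col_sum_HC_select[OF fin]
    by (rule vcat_eq_imp_eq_top) (use u(1) sub(1) h_in_vecs in \<open>auto intro!: sum_in_vecs\<close>)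
  ultimately show False
    using u(2) by (metis sum_fst_as_sum_le2[OF fin(1)])
qed

lemma covering_radius_3:
  assumes "\<not> covers I0 h r0 2"
  shows "covering_radius IC cC (r0 + 3 * m) 3"
  unfolding covering_radius_def
proof (intro conjI allI impI)
  show "covers IC cC (r0 + 3 * m) 3"
    unfolding covers_def using HC_short_sum_all by (auto simp: HC_short_sum_def)
  show "\<not> covers IC cC (r0 + 3 * m) R" if "R < 3" for R
    using covers_mono[of IC cC "r0 + 3 * m" R 2] that not_covers_2[OF assms] by auto
qed

lemma card_label_classes_HC_lab:
  "card (label_classes IC (HC_lab k)) \<le> card P0 + card P2 + card (k ` (vecs m - {0}))"
proof -
  have "HC_lab k ` IC \<subseteq> Inl ` Inl ` P0 \<union> Inl ` Inr ` P2 \<union> Inr ` k ` (vecs m - {0})"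
    using block_of_in(1)[OF partition_P0] block_of_in(1)[OF partition_P2]
    by (auto simp: HC_index_def)
  moreover have "finite P0" "finite P2"
    using finite_elements[OF finite_I0 partition_P0] finite_elements[OF finite_J partition_P2] .
  ultimately have "card (HC_lab k ` IC) \<le> card (Inl ` Inl ` P0 \<union> Inl ` Inr ` P2 \<union> Inr ` k ` (vecs m - {0}))"
    by (intro card_mono) auto
  also have "\<dots> \<le> card P0 + card P2 + card (k ` (vecs m - {0}))"
    by (rule order_trans[OF card_Un_le add_mono[OF order_trans[OF card_Un_le add_mono]]])
      (simp_all add: card_image)
  finally show ?thesis
    using card_label_classes_le[OF finite_IC, of "HC_lab k"] by linarith
qed

lemma RL_partition_3_0_HC_lab: "RL_partition IC cC (r0 + 3 * m) 3 0 (label_classes IC (HC_lab k))"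
  using HC_short_sum_all by (intro RL_partition_label_classesI) (auto simp: HC_short_sum_def)

lemma RL_partition_3_1_HC_lab:
  assumes "\<exists>S\<subseteq>IC. S \<noteq> {} \<and> card S \<le> 3 \<and> inj_on (HC_lab k) S \<and> col_sum cC S = 0"
  shows "RL_partition IC cC (r0 + 3 * m) 3 1 (label_classes IC (HC_lab k))"
proof (rule RL_partition_label_classesI)
  fix v assume v: "v \<in> vecs (r0 + 3 * m)"
  obtain S where S: "S \<subseteq> IC" "card S \<le> 3" "inj_on (HC_lab k) S" "col_sum cC S = v" "S \<noteq> {}"
  proof (cases "v = 0")
    case True
    then show ?thesis using assms that by blast
  next
    case False
    obtain S where "S \<subseteq> IC" "card S \<le> 3" "\<forall>k. inj_on (HC_lab k) S" "col_sum cC S = v"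
      using HC_short_sum_all[OF v] unfolding HC_short_sum_def by blast
    moreover have "S \<noteq> {}" using False calculation(4) by (auto simp: col_sum_def)
    ultimately show ?thesis using that by blast
  qed
  have "finite S" using S(1) finite_subset finite_IC by blast
  then have "1 \<le> card S" using S(5) by (simp add: Suc_le_eq card_gt_0_iff)
  then show "\<exists>S\<subseteq>IC. 1 \<le> card S \<and> card S \<le> 3 \<and> inj_on (HC_lab k) S \<and> col_sum cC S = v"
    using S by blast
qed

lemma nonempty_zero_sum_three_coords:
  obtains k where "card (k ` (vecs m - {0})) \<le> 3"
    "\<exists>S\<subseteq>IC. S \<noteq> {} \<and> card S \<le> 3 \<and> inj_on (HC_lab k) S \<and> col_sum cC S = 0"
proof -
  obtain y1 :: 'f where y1: "y1 \<noteq> 0" using exists_avoiding_two[OF card_field_gt2, of 0 0] by blast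
  obtain y2 :: 'f where y2: "y2 \<noteq> 0" "y2 \<noteq> y1" using exists_avoiding_two[OF card_field_gt2] by blast
  have y12: "y1 + y2 \<noteq> 0" "y1 + y2 \<noteq> y1" "y1 + y2 \<noteq> y2"
    using y1 y2 add_eq_0_iff_eq[of y1 y2] by auto
  define W where "W = {\<phi> y1, \<phi> y2, \<phi> (y1 + y2)}"
  define k where "k w = (if w = \<phi> y1 then 1 else if w = \<phi> y2 then 2 else 0 :: nat)" for w
  have W: "W \<subseteq> vecs m - {0}" "card W = 3" "inj_on k W"
    using y1 y2 y12 by (auto simp: W_def k_def inj_on_def)
  have "y2 + (y1 + y2) = y1" by (simp only: add.commute[of y1 y2] add_cancel_left)
  then have "\<phi> y1 + (\<phi> y2 + \<phi> (y1 + y2)) = 0" by (simp only: coords_add[symmetric] add_self_eq_0 coords_zero)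
  then have "\<Sum>W = 0" using y2 y12 by (simp add: W_def)
  define X where "X = (HC_select {} W {} :: ('a, 'b, 'f) hc_index set)"
  have "finite W" by (simp add: W_def)
  have "col_sum cC X = 0"
    using \<open>finite W\<close> \<open>\<Sum>W = 0\<close> by (simp add: X_def col_sum_HC_select)
  moreover have "X \<subseteq> IC" unfolding X_def using W(1) by (intro HC_select_subset_IC) auto
  moreover have "card X = 3" using \<open>finite W\<close> W(2) by (simp add: X_def card_HC_select)
  moreover have "inj_on (HC_lab k) X" unfolding X_def using W(3) by (intro inj_on_HC_label) auto
  moreover have "card (k ` (vecs m - {0})) \<le> 3"
  proof -
    have "k ` (vecs m - {0}) \<subseteq> {0, 1, 2}" by (auto simp: k_def)
    from card_mono[OF _ this] show ?thesis by simp
  qed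
  ultimately show ?thesis
    by (intro that[of k] exI[of _ X]) auto
qed

lemma nonempty_zero_sum_of_three_zero_sum:
  assumes "three_zero_sum I0 h P0 \<or> three_zero_sum J g P2"
  shows "\<exists>S\<subseteq>IC. S \<noteq> {} \<and> card S \<le> 3 \<and> inj_on (HC_lab k) S \<and> col_sum cC S = 0"
  using assms
proof
  assume "three_zero_sum I0 h P0"
  then obtain S0 where S0: "S0 \<subseteq> I0" "card S0 = 3" "separated P0 S0" "sum h S0 = 0"
    unfolding three_zero_sum_def col_sum_def by blast
  define T where "T = (\<lambda>j. (j, 0 :: 'f)) ` S0"
  have fin: "finite S0" "finite T" using S0(1) finite_I0 finite_subset by (auto simp: T_def)
  have inj: "inj_on (block_of P0 \<circ> fst) T"
    using inj_on_block_of_if_separated[OF partition_P0 S0(1,3)] by (auto simp: T_def inj_on_def)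
  define X where "X = (HC_select T {} {} :: ('a, 'b, 'f) hc_index set)"
  have "card T = 3" using S0(2) by (simp add: T_def card_image inj_on_def)
  then have "card X = 3" by (simp add: X_def card_HC_select fin)
  moreover have "col_sum cC X = 0"
    using fin S0(4) by (simp add: X_def col_sum_HC_select T_def sum.reindex inj_on_def)
  moreover have "X \<subseteq> IC" unfolding X_def using S0(1) by (intro HC_select_subset_IC) (auto simp: T_def)
  moreover have "inj_on (HC_lab k) X" unfolding X_def using inj by (intro inj_on_HC_label) auto
  ultimately show ?thesis by (intro exI[of _ X]) auto
next
  assume "three_zero_sum J g P2"
  then obtain S where S: "S \<subseteq> J" "card S = 3" "separated P2 S" "sum g S = 0"
    unfolding three_zero_sum_def col_sum_def by blast
  have fin: "finite S" using S(1) finite_J finite_subset by blast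
  define X where "X = (HC_select {} {} S :: ('a, 'b, 'f) hc_index set)"
  have "card X = 3" using S(2) fin by (simp add: X_def card_HC_select)
  moreover have "col_sum cC X = 0"
    using fin S(4) by (simp add: X_def col_sum_HC_select)
  moreover have "X \<subseteq> IC" unfolding X_def using S(1) by (intro HC_select_subset_IC) auto
  moreover have "inj_on (HC_lab k) X" unfolding X_def
    using inj_on_block_of_if_separated[OF partition_P2 S(1,3)] by (intro inj_on_HC_label) auto
  ultimately show ?thesis by (intro exI[of _ X]) auto
qed

lemma coords_col_as_sum_2:
  assumes "w \<in> vecs m - {0}"
  obtains S where "S \<subseteq> IC" "card S = 2" "col_sum cC S = cC (Inl (Inl w))"
proof -
  obtain y where y: "w = \<phi> y" "y \<noteq> 0" using assms vecs_eq_range_coords by auto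
  obtain y1 where y1: "y1 \<noteq> 0" "y1 \<noteq> y" using exists_avoiding_two[OF card_field_gt2] by blast
  have "y + y1 \<noteq> 0" "y + y1 \<noteq> y1" using y1 y(2) add_eq_0_iff_eq[of y y1] by auto
  define X where "X = (HC_select {} {\<phi> y1, \<phi> (y + y1)} {} :: ('a, 'b, 'f) hc_index set)"
  have "X \<subseteq> IC" unfolding X_def using \<open>y + y1 \<noteq> 0\<close> y1
    by (intro HC_select_subset_IC) auto
  moreover have "card X = 2" using \<open>y + y1 \<noteq> y1\<close> by (simp add: X_def card_HC_select)
  moreover have "col_sum cC X = cC (Inl (Inl w))"
    using \<open>y + y1 \<noteq> y1\<close> by (simp add: X_def col_sum_HC_select y(1) coords_add[symmetric] add.commute)
  ultimately show ?thesis using that by blast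
qed

lemma A3_col_as_sum_3:
  assumes "j \<in> I0"
  obtains S where "S \<subseteq> IC" "card S = 3" "col_sum cC S = cC (Inr (j, \<xi>))"
proof -
  obtain \<xi>1 where \<xi>1: "\<xi>1 \<noteq> \<xi>" using exists_avoiding_two[OF card_field_gt2] by blast
  obtain \<xi>2 where \<xi>2: "\<xi>2 \<noteq> \<xi>" "\<xi>2 \<noteq> \<xi>1" using exists_avoiding_two[OF card_field_gt2] by blast
  define \<xi>3 where "\<xi>3 = \<xi> + (\<xi>1 + \<xi>2)"
  have "\<xi>3 \<noteq> \<xi>1" "\<xi>3 \<noteq> \<xi>2"
    using \<xi>1 \<xi>2 add_eq_0_iff_eq[of \<xi> \<xi>1] add_eq_0_iff_eq[of \<xi> \<xi>2]
    by (auto simp: \<xi>3_def add.left_commute[of \<xi>1] add.commute[of \<xi>1])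
  have sum3: "\<xi>1 + (\<xi>2 + \<xi>3) = \<xi>" by (simp add: \<xi>3_def add.left_commute)
  define X where "X = (HC_select {(j, \<xi>1), (j, \<xi>2), (j, \<xi>3)} {} {} :: ('a, 'b, 'f) hc_index set)"
  have "X \<subseteq> IC" unfolding X_def using assms by (intro HC_select_subset_IC) auto
  moreover have "card X = 3" using \<xi>2 \<open>\<xi>3 \<noteq> \<xi>1\<close> \<open>\<xi>3 \<noteq> \<xi>2\<close>
    by (simp add: X_def card_HC_select)
  moreover have "col_sum cC X = cC (Inr (j, \<xi>))"
    using \<xi>2 \<open>\<xi>3 \<noteq> \<xi>1\<close> \<open>\<xi>3 \<noteq> \<xi>2\<close>
    by (simp add: X_def col_sum_HC_select add.assoc flip: distrib_left sum3)
  ultimately show ?thesis using that by blast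
qed

lemma J_part_as_sum_2_3:
  assumes "\<forall>t\<in>vecs (2 * m). \<exists>S\<subseteq>J. (card S = 2 \<or> card S = 3) \<and> col_sum g S = t"
    and "t \<in> vecs (2 * m)"
  shows "\<exists>S\<subseteq>IC. 2 \<le> card S \<and> card S \<le> 3 \<and> col_sum cC S = vcat r0 0 (vcat m 0 t)"
proof -
  obtain S where S: "S \<subseteq> J" "card S = 2 \<or> card S = 3" "sum g S = t"
    using assms unfolding col_sum_def by blast
  define X where "X = (HC_select {} {} S :: ('a, 'b, 'f) hc_index set)"
  have "finite S" using S(1) finite_J by (rule finite_subset)
  then have "card X = card S" "col_sum cC X = vcat r0 0 (vcat m 0 t)"
    using S(3) by (simp_all add: X_def card_HC_select col_sum_HC_select)
  moreover have "X \<subseteq> IC" unfolding X_def using S(1) by (intro HC_select_subset_IC) auto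
  ultimately show ?thesis using S(2) by (intro exI[of _ X]) auto
qed

lemma HC_index_cases:
  assumes "x \<in> IC"
  obtains (coords) w where "w \<in> vecs m - {0}" "x = Inl (Inl w)"
    | (V2m) j where "j \<in> J" "x = Inl (Inr j)"
    | (A3) j \<xi> where "j \<in> I0" "x = Inr (j, \<xi>)"
  using assms unfolding HC_index_def by auto

lemma HC_col_as_sum_2_3:
  assumes "\<forall>t\<in>vecs (2 * m). \<exists>S\<subseteq>J. (card S = 2 \<or> card S = 3) \<and> col_sum g S = t"
    and "x \<in> IC"
  shows "\<exists>S\<subseteq>IC. 2 \<le> card S \<and> card S \<le> 3 \<and> col_sum cC S = cC x"
  using assms(2)
proof (cases rule: HC_index_cases)
  case (coords w)
  obtain S where "S \<subseteq> IC" "card S = 2" "col_sum cC S = cC (Inl (Inl w))"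
    using coords_col_as_sum_2[OF coords(1)] .
  then show ?thesis using coords(2) by (intro exI[of _ S]) simp
next
  case (V2m j)
  then show ?thesis using J_part_as_sum_2_3[OF assms(1) g_in_vecs[of j]] by simp
next
  case (A3 j \<xi>)
  obtain S where "S \<subseteq> IC" "card S = 3" "col_sum cC S = cC (Inr (j, \<xi>))"
    using A3_col_as_sum_3[OF A3(1)] .
  then show ?thesis using A3(2) by (intro exI[of _ S]) simp
qed

lemma RL_partition_3_2_singletons:
  assumes "\<forall>t\<in>vecs (2 * m). \<exists>S\<subseteq>J. (card S = 2 \<or> card S = 3) \<and> col_sum g S = t"
  shows "RL_partition IC cC (r0 + 3 * m) 3 2 ((\<lambda>x. {x}) ` IC)"
proof (rule RL_partition_singletonsI)
  fix v assume "v \<in> vecs (r0 + 3 * m)"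
  then obtain S where S: "S \<subseteq> IC" "card S \<le> 3" "col_sum cC S = v"
    using HC_short_sum_all unfolding HC_short_sum_def by blast
  have "finite S" using S(1) finite_IC by (rule finite_subset)
  from this S(2) show "\<exists>S\<subseteq>IC. 2 \<le> card S \<and> card S \<le> 3 \<and> col_sum cC S = v"
  proof (cases rule: card_le_3_cases)
    case 1
    then show ?thesis
      using S(3) J_part_as_sum_2_3[OF assms zero_in_vecs] by (simp add: col_sum_def)
  next
    case (2 x)
    then show ?thesis
      using S(1,3) HC_col_as_sum_2_3[OF assms, of x] by (simp add: col_sum_def)
  next
    case (3 x y)
    then have "2 \<le> card S" by simp
    then show ?thesis using S by blast
  next
    case (4 x y z)
    then have "2 \<le> card S" by simp
    then show ?thesis using S by blast
  qed
qed

lemma code_params_HC: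
  assumes "\<not> covers I0 h r0 2"
  shows "code_params IC cC (card IC) (r0 + 3 * m) 3"
  using covering_radius_3[OF assms] HC_col_in_vecs by (simp add: code_params_def)

lemma RL_partition_3_0_bound:
  "\<exists>P. RL_partition IC cC (r0 + 3 * m) 3 0 P \<and> card P \<le> card P0 + card P2 + 1"
proof -
  have "card ((\<lambda>_. 0 :: nat) ` (vecs m - {0})) \<le> 1" by (simp add: card_le_Suc0_iff_eq)
  then show ?thesis
    using RL_partition_3_0_HC_lab card_label_classes_HC_lab[of "\<lambda>_. 0"]
    by (intro exI[of _ "label_classes IC (HC_lab (\<lambda>_. 0))"] conjI) auto
qed

lemma RL_partition_3_1_bound:
  "\<exists>P. RL_partition IC cC (r0 + 3 * m) 3 1 P \<and> card P \<le> card P0 + card P2 + 3"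
proof -
  obtain k where "card (k ` (vecs m - {0})) \<le> 3"
    "\<exists>S\<subseteq>IC. S \<noteq> {} \<and> card S \<le> 3 \<and> inj_on (HC_lab k) S \<and> col_sum cC S = 0"
    by (rule nonempty_zero_sum_three_coords)
  then show ?thesis
    using RL_partition_3_1_HC_lab[of k] card_label_classes_HC_lab[of k]
    by (intro exI[of _ "label_classes IC (HC_lab k)"] conjI) auto
qed

lemma RL_partition_3_1_bound_if_three_zero_sum:
  assumes "three_zero_sum I0 h P0 \<or> three_zero_sum J g P2"
  shows "\<exists>P. RL_partition IC cC (r0 + 3 * m) 3 1 P \<and> card P \<le> card P0 + card P2 + 1"
proof -
  have "card ((\<lambda>_. 0 :: nat) ` (vecs m - {0})) \<le> 1" by (simp add: card_le_Suc0_iff_eq)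
  then show ?thesis
    using RL_partition_3_1_HC_lab[OF nonempty_zero_sum_of_three_zero_sum[OF assms]]
      card_label_classes_HC_lab[of "\<lambda>_. 0"]
    by (intro exI[of _ "label_classes IC (HC_lab (\<lambda>_. 0))"] conjI) auto
qed

end

theorem theorem7p3:
  fixes I0 :: "'a set" and h :: "'a \<Rightarrow> nat \<Rightarrow> bit" and P0 :: "'a set set"
    and J :: "'b set" and g :: "'b \<Rightarrow> nat \<Rightarrow> bit" and P2 :: "'b set set"
    and \<phi> :: "'f::{field,finite} \<Rightarrow> nat \<Rightarrow> bit" and \<beta> :: "'a \<Rightarrow> 'f"
    and n0 r0 p0 n2m p2m m :: nat
  assumes C0: "code_params I0 h n0 r0 3"
    and P0: "RL_partition I0 h r0 3 0 P0" "card P0 = p0"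
    and V2m: "code_params J g n2m (2 * m) 2"
    and P2: "RL_partition J g (2 * m) 2 0 P2" "card P2 = p2m"
    and m: "m \<ge> 2" "2 ^ m - 1 \<ge> p0"
    and field_card: "card (UNIV :: 'f set) = 2 ^ m"
    and basis: "bij_betw \<phi> UNIV (vecs m)" "\<And>x y. \<phi> (x + y) = \<phi> x + \<phi> y"
    and ind: "indicator_assignment I0 P0 \<beta>" "\<forall>j\<in>I0. \<beta> j \<noteq> 0"
  defines "IC \<equiv> HC_index m J I0 :: ((((nat \<Rightarrow> bit) + 'b) + ('a \<times> 'f)) set)"
    and "cC \<equiv> HC_col r0 m \<phi> h g \<beta>"
  shows "code_params IC cC (2 ^ m * (n0 + 1) + n2m - 1) (r0 + 3 * m) 3
    \<and> (\<exists>P. RL_partition IC cC (r0 + 3 * m) 3 0 P \<and> card P \<le> p0 + p2m + 1)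
    \<and> (\<exists>P. RL_partition IC cC (r0 + 3 * m) 3 1 P \<and> card P \<le> p0 + p2m + 3)
    \<and> (three_zero_sum I0 h P0 \<or> three_zero_sum J g P2 \<longrightarrow>
           (\<exists>P. RL_partition IC cC (r0 + 3 * m) 3 1 P \<and> card P \<le> p0 + p2m + 1))
    \<and> ((\<forall>v\<in>vecs (2 * m). \<exists>S\<subseteq>J. (card S = 2 \<or> card S = 3) \<and> col_sum g S = v) \<longrightarrow>
           RL_partition IC cC (r0 + 3 * m) 3 2 ((\<lambda>x. {x}) ` IC))"
proof -
  \<comment> \<open>The hypothesis \<open>p0 \<le> 2 ^ m - 1\<close> only guarantees that an indicator assignment exists.\<close>
  have "(4::nat) \<le> 2 ^ m" using power_increasing[OF m(1), of "2::nat"] by simp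
  then interpret HC: HC_construction \<phi> m I0 h P0 J g P2 \<beta> r0
    using C0 V2m P0(1) P2(1) basis ind field_card by unfold_locales (auto simp: code_params_def)
  have "card IC = 2 ^ m * n0 + (2 ^ m - 1) + n2m"
    using HC.card_IC C0 V2m field_card unfolding IC_def code_params_def by simp
  moreover have "(1::nat) \<le> 2 ^ m" "2 ^ m * (n0 + 1) = 2 ^ m * n0 + (2::nat) ^ m"
    by (simp_all add: algebra_simps)
  ultimately have card_IC: "card IC = 2 ^ m * (n0 + 1) + n2m - 1" by linarith
  have "\<not> covers I0 h r0 2" using C0 by (simp add: code_params_def covering_radius_def)
  then show ?thesis
    using HC.code_params_HC HC.RL_partition_3_0_bound HC.RL_partition_3_1_bound
      HC.RL_partition_3_1_bound_if_three_zero_sum HC.RL_partition_3_2_singletons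
    unfolding card_IC[symmetric] P0(2)[symmetric] P2(2)[symmetric] IC_def cC_def
    by blast
qed

end
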